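(* Let $\mathcal{A},\mathcal{B}$ be arbitrary index sets and let the coefficients $a_{\alpha\beta},b_{\alpha\beta},c_{\alpha\beta},f_{\alpha\beta},N_{\alpha\beta}$ ($\alpha\in\mathcal{A},\beta\in\mathcal{B}$) on $\Omega=B_2\subset\mathbb{R}^d$ satisfy assumptions (A), (B), (C) described in the context. Let $x_k\in B_1$ and $r_k>0$ with $x_k\to z$ for some $z\in\overline{B_1}$ and $r_k\to 0$ as $k\to\infty$, and let $\mathcal{I}_k:=\mathcal{I}^{r_k}(x_k)$ be the rescaled operators defined in the context. Define $$\mathcal{I}^0u(x):=\sup_{\alpha\in\mathcal{A}}\inf_{\beta\in\mathcal{B}}\{-\mathrm{tr}\,(a_{\alpha\beta}(z)D^2u(x))\}.$$ Then $\mathcal{I}_k$ converges weakly to $\mathcal{I}^0$ in $B_2$, i.e. for every $x_0$ and $\epsilon>0$ with $B_\epsilon(x_0)\subset B_2$ and every $\varphi\in L^\infty(\mathbb{R}^d)\cap C^2(B_\epsilon(x_0))$, we have $\mathcal{I}_k[x,\varphi]\to\mathcal{I}^0\varphi(x)$ uniformly in $x\in B_{\epsilon/2}(x_0)$ as $k\to\infty$.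
   Context: Assumptions, with $\Omega=B_2$ and all uniform in $\alpha\in\mathcal{A},\beta\in\mathcal{B}$: (A) $a_{\alpha\beta}:\overline\Omega\to$ symmetric $d\times d$ matrices, $b_{\alpha\beta}:\overline\Omega\to\mathbb{R}^d$, $c_{\alpha\beta},f_{\alpha\beta}:\overline\Omega\to\mathbb{R}$ are bounded and uniformly continuous on $\overline\Omega$, uniformly in the indices; (B) $\lambda I\le a_{\alpha\beta}\le\Lambda I$ on $\overline\Omega$ for some $0<\lambda\le\Lambda$; (C) $N_{\alpha\beta}:\overline\Omega\times\mathbb{R}^d\to[0,\infty)$ satisfies $0\le N_{\alpha\beta}(x,z)\le K(z)$ for a measurable $K:\mathbb{R}^d\to[0,\infty)$ with $K(0)=N_{\alpha\beta}(x,0)=0$ and $\int_{\mathbb{R}^d}\min\{|z|^2,1\}K(z)\,dz<\infty$, and for each $\sigma>0$ and each $|z|\ge\sigma$, $x\mapsto N_{\alpha\beta}(x,z)$ is uniformly continuous on $\overline\Omega$, uniformly in the indices. Rescaled operator: for $x_0\in B_1$, $r>0$, and $\tilde x:=r(x-x_0)+x_0$, $$\mathcal{I}^r(x_0)[x,u]:=\sup_{\alpha\in\mathcal{A}}\inf_{\beta\in\mathcal{B}}\Big\{-\mathrm{tr}\,(a_{\alpha\beta}(\tilde x)D^2u(x))-I^r_{\alpha\beta}(x_0)[x,u]+r\,b_{\alpha\beta}(\tilde x)\cdot Du(x)+r^2c_{\alpha\beta}(\tilde x)u(x)+r^2f_{\alpha\beta}(\tilde x)\Big\},$$ $$I^r_{\alpha\beta}(x_0)[x,u]:=\int_{\mathbb{R}^d}\big(u(x+z)-u(x)-\chi_{B_{1/r}}(z)Du(x)\cdot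 z\big)\,r^{d+2}N_{\alpha\beta}(\tilde x,rz)\,dz.$$ (This equals $r^2\mathcal{I}[\tilde x, u(r^{-1}(\cdot-x_0)+x_0)]$ for the unscaled operator $\mathcal{I}$ with $\chi_{B_1}$ in the nonlocal term.) $B_r(x)$ is the open ball of radius $r$ centered at $x$. *)

theory Defs
  imports "HOL-Analysis.Analysis"
begin

text \<open>Gradient and Hessian of a real function on real^'n (well defined where u is
  differentiable, resp. where the gradient is differentiable).\<close>
definition grad :: "(real^'n \<Rightarrow> real) \<Rightarrow> real^'n \<Rightarrow> real^'n" where
  "grad u x = (SOME g. (u has_derivative (\<lambda>h. g \<bullet> h)) (at x))"

definition hess :: "(real^'n \<Rightarrow> real) \<Rightarrow> real^'n \<Rightarrow> real^'n^'n" where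
  "hess u x = (SOME H. ((grad u) has_derivative (\<lambda>h. H *v h)) (at x))"

definition C2_on :: "(real^'n) set \<Rightarrow> (real^'n \<Rightarrow> real) \<Rightarrow> bool" where
  "C2_on S u \<longleftrightarrow> (\<forall>x\<in>S. (u has_derivative (\<lambda>h. grad u x \<bullet> h)) (at x))
     \<and> (\<forall>x\<in>S. ((grad u) has_derivative (\<lambda>h. hess u x *v h)) (at x))
     \<and> continuous_on S (hess u)"

definition nonlocal_r ::
  "('a \<Rightarrow> 'b \<Rightarrow> real^'n \<Rightarrow> real^'n \<Rightarrow> real) \<Rightarrow> real \<Rightarrow> real^'n \<Rightarrow> 'a \<Rightarrow> 'b
    \<Rightarrow> real^'n \<Rightarrow> (real^'n \<Rightarrow> real) \<Rightarrow> real" where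
  "nonlocal_r N r x0 \<alpha> \<beta> x u =
     (\<integral>z. (u (x + z) - u x - indicator (ball 0 (1/r)) z * (grad u x \<bullet> z))
            * r ^ (CARD('n) + 2) * N \<alpha> \<beta> (r *\<^sub>R (x - x0) + x0) (r *\<^sub>R z) \<partial>lborel)"

definition op_r ::
  "('a \<Rightarrow> 'b \<Rightarrow> real^'n \<Rightarrow> real^'n^'n) \<Rightarrow> ('a \<Rightarrow> 'b \<Rightarrow> real^'n \<Rightarrow> real^'n)
   \<Rightarrow> ('a \<Rightarrow> 'b \<Rightarrow> real^'n \<Rightarrow> real) \<Rightarrow> ('a \<Rightarrow> 'b \<Rightarrow> real^'n \<Rightarrow> real)
   \<Rightarrow> ('a \<Rightarrow> 'b \<Rightarrow> real^'n \<Rightarrow> real^'n \<Rightarrow> real)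
   \<Rightarrow> real \<Rightarrow> real^'n \<Rightarrow> real^'n \<Rightarrow> (real^'n \<Rightarrow> real) \<Rightarrow> real" where
  "op_r a b c f N r x0 x u =
     (SUP \<alpha>. INF \<beta>.
        (let xt = r *\<^sub>R (x - x0) + x0 in
          - trace (a \<alpha> \<beta> xt ** hess u x) - nonlocal_r N r x0 \<alpha> \<beta> x u
          + r * (b \<alpha> \<beta> xt \<bullet> grad u x) + r\<^sup>2 * c \<alpha> \<beta> xt * u x + r\<^sup>2 * f \<alpha> \<beta> xt))"

definition op_0 :: "('a \<Rightarrow> 'b \<Rightarrow> real^'n \<Rightarrow> real^'n^'n) \<Rightarrow> real^'n
   \<Rightarrow> real^'n \<Rightarrow> (real^'n \<Rightarrow> real) \<Rightarrow> real" where
  "op_0 a z x u = (SUP \<alpha>. INF \<beta>. - trace (a \<alpha> \<beta> z ** hess u x))"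

end

theory Submission
  imports Defs
begin

text \<open>Write \<open>r = r\<^sub>k\<close> and \<open>x' = r (x - x\<^sub>k) + x\<^sub>k\<close>. Since \<open>x' \<rightarrow> z\<close> uniformly in \<open>x\<close>,
  uniform continuity makes \<open>tr (a(x') D\<^sup>2\<phi>)\<close> uniformly close to \<open>tr (a(z) D\<^sup>2\<phi>)\<close>, while the
  drift, zeroth order and source terms carry factors \<open>r\<close> and \<open>r\<^sup>2\<close>. In the nonlocal term the
  substitution \<open>w = r z\<close> gives an integrand bounded by \<open>H |w|\<^sup>2 K(w)\<close> near the origin (second
  order Taylor expansion of \<open>\<phi>\<close>) and by \<open>r\<^sup>2 K(w) + r |w| K(w)\<close> elsewhere (the \<open>L\<^sup>\<infinity>\<close> bound
  of \<open>\<phi>\<close>, plus the gradient term inside \<open>B\<^sub>1\<close>). This majorant is dominated by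
  \<open>min(|w|\<^sup>2, 1) K(w)\<close> and tends to \<open>0\<close> pointwise as \<open>r \<rightarrow> 0\<close>, so its integral vanishes in the
  limit. All bounds are uniform in \<open>\<alpha>, \<beta>\<close> and therefore pass through \<open>sup inf\<close>.\<close>

lemma lborel_dilation:
  fixes F :: "'a::euclidean_space \<Rightarrow> real"
  assumes [measurable]: "F \<in> borel_measurable lborel" and r: "0 < r" and int: "integrable lborel F"
  shows "integrable lborel (\<lambda>z. r ^ DIM('a) * F (r *\<^sub>R z))"
    and "(\<integral>z. r ^ DIM('a) * F (r *\<^sub>R z) \<partial>lborel) = (\<integral>w. F w \<partial>lborel)"
proof -
  let ?D = "density (distr lborel borel (\<lambda>x::'a. 0 + r *\<^sub>R x)) (\<lambda>_. \<bar>r\<bar> ^ DIM('a))"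
  have lborel_eq: "lborel = ?D"
    using lborel_affine[of r "0::'a"] r by simp
  have "integrable ?D F"
    using int lborel_eq by simp
  then show "integrable lborel (\<lambda>z. r ^ DIM('a) * F (r *\<^sub>R z))"
    using r by (subst (asm) integrable_density; simp) (subst (asm) integrable_distr_eq; simp)
  have "(\<integral>w. F w \<partial>lborel) = (\<integral>w. F w \<partial>?D)"
    using lborel_eq by simp
  also have "\<dots> = (\<integral>z. r ^ DIM('a) * F (r *\<^sub>R z) \<partial>lborel)"
    using r by (subst integral_density; simp) (subst integral_distr; simp)
  finally show "(\<integral>z. r ^ DIM('a) * F (r *\<^sub>R z) \<partial>lborel) = (\<integral>w. F w \<partial>lborel)" ..
qed

lemma cINF_abs_diff_le:
  fixes f g :: "'b \<Rightarrow> real"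
  assumes close: "\<And>i. \<bar>f i - g i\<bar> \<le> \<eta>" and bdd: "bdd_below (range g)"
  shows "\<bar>(INF i. f i) - (INF i. g i)\<bar> \<le> \<eta>"
proof -
  obtain m where m: "\<And>i. m \<le> g i" using bdd by (auto simp: bdd_below_def)
  have bdd_f: "bdd_below (range f)"
    by (rule bdd_belowI2[where m="m - \<eta>"]) (use m close in \<open>smt (verit)\<close>)
  have "(INF i. g i) - \<eta> \<le> (INF i. f i)"
    using cINF_lower[OF bdd] close by (intro cINF_greatest) (auto simp: abs_le_iff, smt (verit))
  moreover have "(INF i. f i) - \<eta> \<le> (INF i. g i)"
    using cINF_lower[OF bdd_f] close by (intro cINF_greatest) (auto simp: abs_le_iff, smt (verit))
  ultimately show ?thesis by linarith
qed

lemma cSUP_abs_diff_le: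
  fixes f g :: "'b \<Rightarrow> real"
  assumes close: "\<And>i. \<bar>f i - g i\<bar> \<le> \<eta>" and bdd: "bdd_above (range g)"
  shows "\<bar>(SUP i. f i) - (SUP i. g i)\<bar> \<le> \<eta>"
proof -
  obtain m where m: "\<And>i. g i \<le> m" using bdd by (auto simp: bdd_above_def)
  have bdd_f: "bdd_above (range f)"
    by (rule bdd_aboveI2[where M="m + \<eta>"]) (use m close in \<open>smt (verit)\<close>)
  have "(SUP i. f i) \<le> (SUP i. g i) + \<eta>"
    using cSUP_upper[OF _ bdd] close by (intro cSUP_least) (auto simp: abs_le_iff, smt (verit))
  moreover have "(SUP i. g i) \<le> (SUP i. f i) + \<eta>"
    using cSUP_upper[OF _ bdd_f] close by (intro cSUP_least) (auto simp: abs_le_iff, smt (verit))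
  ultimately show ?thesis by linarith
qed

lemma SUP_INF_abs_diff_le:
  fixes Q P :: "'a \<Rightarrow> 'b \<Rightarrow> real"
  assumes close: "\<And>\<alpha> \<beta>. \<bar>Q \<alpha> \<beta> - P \<alpha> \<beta>\<bar> \<le> \<eta>" and bdd: "\<And>\<alpha> \<beta>. \<bar>P \<alpha> \<beta>\<bar> \<le> B"
  shows "\<bar>(SUP \<alpha>. INF \<beta>. Q \<alpha> \<beta>) - (SUP \<alpha>. INF \<beta>. P \<alpha> \<beta>)\<bar> \<le> \<eta>"
proof (rule cSUP_abs_diff_le)
  have "-B \<le> P \<alpha> \<beta>" for \<alpha> \<beta>
    using bdd[of \<alpha> \<beta>] by linarith
  then have bdd_below: "bdd_below (range (P \<alpha>))" for \<alpha>
    by (intro bdd_belowI2)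
  show "\<bar>(INF \<beta>. Q \<alpha> \<beta>) - (INF \<beta>. P \<alpha> \<beta>)\<bar> \<le> \<eta>" for \<alpha>
    using close bdd_below by (rule cINF_abs_diff_le)
  have "(INF \<beta>. P \<alpha> \<beta>) \<le> B" for \<alpha>
    using cINF_lower[OF bdd_below, of undefined \<alpha>] bdd[of \<alpha> undefined] by simp
  then show "bdd_above (range (\<lambda>\<alpha>. INF \<beta>. P \<alpha> \<beta>))"
    by (intro bdd_aboveI2)
qed

lemma abs_trace_matrix_mult_le:
  fixes A H :: "real^'n^'n"
  shows "\<bar>trace (A ** H)\<bar> \<le> real CARD('n) ^ 2 * (norm A * norm H)"
proof -
  have entry_le: "\<bar>M $ i $ j\<bar> \<le> norm M" for M :: "real^'n^'n" and i j
    using component_le_norm_cart[of "M $ i" j] Finite_Cartesian_Product.norm_nth_le[of M i] by linarith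
  have "\<bar>trace (A ** H)\<bar> = \<bar>\<Sum>i\<in>UNIV. \<Sum>j\<in>UNIV. A $ i $ j * H $ j $ i\<bar>"
    by (simp add: trace_def matrix_matrix_mult_def)
  also have "\<dots> \<le> (\<Sum>i\<in>(UNIV::'n set). \<Sum>j\<in>(UNIV::'n set). \<bar>A $ i $ j\<bar> * \<bar>H $ j $ i\<bar>)"
    by (rule order_trans[OF sum_abs], rule sum_mono) (simp add: sum_abs flip: abs_mult)
  also have "\<dots> \<le> (\<Sum>i\<in>(UNIV::'n set). \<Sum>j\<in>(UNIV::'n set). norm A * norm H)"
    by (intro sum_mono mult_mono entry_le) auto
  also have "\<dots> = real CARD('n) ^ 2 * (norm A * norm H)"
    by (simp add: power2_eq_square)
  finally show ?thesis .
qed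

lemma trace_matrix_mult_diff:
  fixes A B H :: "real^'n^'n"
  shows "trace (A ** H) - trace (B ** H) = trace ((A - B) ** H)"
  by (simp add: trace_def matrix_matrix_mult_def sum_subtractf[symmetric] algebra_simps)

text \<open>At \<open>w = r z\<close>, \<open>r\<^sup>d\<close> times this bounds the integrand of \<^const>\<open>nonlocal_r\<close>: \<open>H\<close> bounds
  the Taylor remainder of \<open>\<phi>\<close> for \<open>|z| < \<delta>\<close>, \<open>M\<close> bounds \<open>|\<phi>(x + z) - \<phi>(x)|\<close> and \<open>G\<close> the
  gradient, whose term only survives for \<open>|w| < 1\<close>.\<close>
definition nonlocal_majorant ::
  "real \<Rightarrow> real \<Rightarrow> real \<Rightarrow> real \<Rightarrow> ('a::real_normed_vector \<Rightarrow> real) \<Rightarrow> real \<Rightarrow> 'a \<Rightarrow> real" where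
  "nonlocal_majorant H M G \<delta> K r w =
     (if norm w < r * \<delta> then H * (norm w)\<^sup>2 * K w
      else M * r\<^sup>2 * K w + (if norm w < 1 then G * r * norm w * K w else 0))"

lemma nonlocal_majorant_measurable [measurable]:
  fixes K :: "'a::euclidean_space \<Rightarrow> real"
  assumes [measurable]: "K \<in> borel_measurable lborel"
  shows "nonlocal_majorant H M G \<delta> K r \<in> borel_measurable lborel"
  unfolding nonlocal_majorant_def[abs_def] by measurable

lemma nonlocal_majorant_nonneg:
  assumes "0 \<le> K w" "0 \<le> H" "0 \<le> M" "0 \<le> G" "0 < r"
  shows "0 \<le> nonlocal_majorant H M G \<delta> K r w"
  using assms by (simp add: nonlocal_majorant_def)

lemma nonlocal_majorant_le:
  assumes K: "0 \<le> K w" and nonneg: "0 \<le> H" "0 \<le> M" "0 \<le> G"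
    and \<delta>: "0 < \<delta>" "\<delta> \<le> 1" and r: "0 < r" "r \<le> 1"
  shows "nonlocal_majorant H M G \<delta> K r w
           \<le> (H + M * (1 + 1/\<delta>\<^sup>2) + G/\<delta>) * (min ((norm w)\<^sup>2) 1 * K w)"
proof -
  let ?C = "H + M * (1 + 1/\<delta>\<^sup>2) + G/\<delta>"
  have C: "H \<le> ?C" "M \<le> ?C" "M / \<delta>\<^sup>2 + G / \<delta> \<le> ?C"
    using nonneg \<delta> by (auto simp: algebra_simps)
  consider "norm w < r * \<delta>" | "r * \<delta> \<le> norm w" "norm w < 1" | "1 \<le> norm w"
    by linarith
  then show ?thesis
  proof cases
    case 1
    then have "norm w < 1"
      using r \<delta> by (smt (verit) mult_le_one norm_ge_zero)
    then have "min ((norm w)\<^sup>2) 1 = (norm w)\<^sup>2"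
      by (simp add: power_le_one)
    then show ?thesis
      using 1 C K by (simp add: nonlocal_majorant_def mult.assoc mult_right_mono)
  next
    case 2
    have r_le: "r \<le> norm w / \<delta>"
      using 2 \<delta> by (simp add: field_simps)
    then have r2_le: "r\<^sup>2 \<le> (norm w)\<^sup>2 / \<delta>\<^sup>2"
      using power_mono[OF r_le, of 2] r by (simp add: power_divide)
    have "nonlocal_majorant H M G \<delta> K r w = M * r\<^sup>2 * K w + G * r * norm w * K w"
      using 2 by (simp add: nonlocal_majorant_def)
    also have "\<dots> \<le> M * ((norm w)\<^sup>2 / \<delta>\<^sup>2) * K w + G * (norm w / \<delta>) * norm w * K w"
      using r2_le r_le nonneg K by (intro add_mono mult_right_mono mult_left_mono) auto
    also have "\<dots> = (M / \<delta>\<^sup>2 + G / \<delta>) * ((norm w)\<^sup>2 * K w)"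
      by (simp add: power2_eq_square field_simps)
    also have "\<dots> \<le> ?C * ((norm w)\<^sup>2 * K w)"
      using C K by (intro mult_right_mono) auto
    finally show ?thesis
      using 2 by (simp add: power_le_one)
  next
    case 3
    have "r\<^sup>2 \<le> 1" "r * \<delta> \<le> 1"
      using r \<delta> by (simp_all add: power_le_one mult_le_one)
    then have "nonlocal_majorant H M G \<delta> K r w \<le> M * K w"
      using 3 r \<delta> nonneg K by (auto simp: nonlocal_majorant_def intro: mult_left_le mult_right_mono)
    also have "\<dots> \<le> ?C * K w"
      using C K by (intro mult_right_mono) auto
    finally show ?thesis
      using 3 by (simp add: one_le_power)
  qed
qed

lemma nonlocal_majorant_integral_tendsto_0:
  fixes K :: "'a::euclidean_space \<Rightarrow> real"
  assumes [measurable]: "K \<in> borel_measurable lborel" and K: "\<forall>w. 0 \<le> K w" "K 0 = 0"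
    and K_integrable: "integrable lborel (\<lambda>w. min ((norm w)\<^sup>2) 1 * K w)"
    and nonneg: "0 \<le> H" "0 \<le> M" "0 \<le> G" and \<delta>: "0 < \<delta>" "\<delta> \<le> 1"
  shows "((\<lambda>r. \<integral>w. nonlocal_majorant H M G \<delta> K r w \<partial>lborel) \<longlongrightarrow> 0) (at_right 0)"
    and "0 < r \<Longrightarrow> r \<le> 1 \<Longrightarrow> integrable lborel (nonlocal_majorant H M G \<delta> K r)"
proof -
  let ?w = "\<lambda>w. (H + M * (1 + 1/\<delta>\<^sup>2) + G/\<delta>) * (min ((norm w)\<^sup>2) 1 * K w)"
  have w: "integrable lborel ?w"
    using K_integrable by simp
  have bound: "norm (nonlocal_majorant H M G \<delta> K r w) \<le> ?w w" if "0 < r" "r \<le> 1" for r w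
    using nonlocal_majorant_nonneg[of K w H M G r \<delta>] nonlocal_majorant_le[of K w H M G \<delta> r] K nonneg \<delta> that
    by simp
  show "integrable lborel (nonlocal_majorant H M G \<delta> K r)" if "0 < r" "r \<le> 1"
    using bound[OF that] by (intro Bochner_Integration.integrable_bound[OF w])
      (auto intro: order_trans[OF _ abs_ge_self])
  have pointwise: "(\<lambda>n. nonlocal_majorant H M G \<delta> K (S n) w) \<longlonglongrightarrow> 0"
    if S: "S \<longlonglongrightarrow> 0" "\<And>n. 0 < S n" for S w
  proof (cases "w = 0")
    case True
    then show ?thesis
      using S \<delta> K by (simp add: nonlocal_majorant_def)
  next
    case False
    have far: "\<forall>\<^sub>F n in sequentially. S n * \<delta> < norm w"
      using order_tendstoD(2)[OF tendsto_mult_left_zero[OF S(1)], of "norm w" \<delta>] False by simp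
    have "(\<lambda>n. M * (S n)\<^sup>2 * K w + (if norm w < 1 then G * S n * norm w * K w else 0)) \<longlonglongrightarrow> 0"
      by (cases "norm w < 1") (auto intro!: tendsto_eq_intros S(1))
    then show ?thesis
      by (rule Lim_transform_eventually) (use far in \<open>auto elim!: eventually_mono simp: nonlocal_majorant_def\<close>)
  qed
  show "((\<lambda>r. \<integral>w. nonlocal_majorant H M G \<delta> K r w \<partial>lborel) \<longlongrightarrow> 0) (at_right 0)"
  proof (rule tendsto_at_right_sequentially[of 0 1])
    fix S :: "nat \<Rightarrow> real" assume S: "\<And>n. 0 < S n" "\<And>n. S n < 1" "S \<longlonglongrightarrow> 0"
    have "(\<lambda>n. \<integral>w. nonlocal_majorant H M G \<delta> K (S n) w \<partial>lborel) \<longlonglongrightarrow> (\<integral>w. 0 \<partial>(lborel :: 'a measure))"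
    proof (rule integral_dominated_convergence[where s="\<lambda>n. nonlocal_majorant H M G \<delta> K (S n)"
          and f="\<lambda>_. 0", OF _ _ w])
      show "AE w in lborel. (\<lambda>n. nonlocal_majorant H M G \<delta> K (S n) w) \<longlonglongrightarrow> 0"
        using S by (simp add: pointwise)
      show "AE w in lborel. norm (nonlocal_majorant H M G \<delta> K (S n) w) \<le> ?w w" for n
        using bound[of "S n"] S(1,2)[of n] by simp
    qed simp_all
    then show "(\<lambda>n. \<integral>w. nonlocal_majorant H M G \<delta> K (S n) w \<partial>lborel) \<longlonglongrightarrow> 0"
      by simp
  qed simp
qed

lemma abs_taylor2_remainder_le:
  fixes \<phi> :: "real^'n \<Rightarrow> real"
  assumes S: "convex S"
    and d1: "\<And>y. y \<in> S \<Longrightarrow> (\<phi> has_derivative (\<lambda>h. grad \<phi> y \<bullet> h)) (at y)"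
    and d2: "\<And>y. y \<in> S \<Longrightarrow> ((grad \<phi>) has_derivative (\<lambda>h. hess \<phi> y *v h)) (at y)"
    and H: "\<And>y. y \<in> S \<Longrightarrow> onorm (\<lambda>h. hess \<phi> y *v h) \<le> H"
    and x: "x \<in> S" and xw: "x + w \<in> S"
  shows "\<bar>\<phi> (x + w) - \<phi> x - grad \<phi> x \<bullet> w\<bar> \<le> H * (norm w)\<^sup>2"
proof -
  have H_nonneg: "0 \<le> H"
    using H[OF x] onorm_pos_le[of "\<lambda>h. hess \<phi> x *v h"] by simp
  have grad_lipschitz: "norm (grad \<phi> y - grad \<phi> x) \<le> H * norm (y - x)" if "y \<in> S" for y
    by (rule differentiable_bound[OF S _ H that x]) (auto intro: has_derivative_at_withinI d2)
  let ?T = "closed_segment x (x + w)"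
  have T: "?T \<subseteq> S"
    using S x xw by (simp add: closed_segment_subset)
  have "norm ((\<phi> (x + w) - grad \<phi> x \<bullet> (x + w)) - (\<phi> x - grad \<phi> x \<bullet> x)) \<le> (H * norm w) * norm ((x + w) - x)"
  proof (rule differentiable_bound[where f = "\<lambda>y. \<phi> y - grad \<phi> x \<bullet> y" and S = ?T
        and f' = "\<lambda>y h. grad \<phi> y \<bullet> h - grad \<phi> x \<bullet> h"])
    show "((\<lambda>y. \<phi> y - grad \<phi> x \<bullet> y) has_derivative (\<lambda>h. grad \<phi> y \<bullet> h - grad \<phi> x \<bullet> h)) (at y within ?T)"
      if "y \<in> ?T" for y
      using T that
      by (intro has_derivative_diff has_derivative_at_withinI[OF d1] has_derivative_inner_right
          has_derivative_ident) auto
    show "onorm (\<lambda>h. grad \<phi> y \<bullet> h - grad \<phi> x \<bullet> h) \<le> H * norm w" if "y \<in> ?T" for y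
    proof -
      have "onorm (\<lambda>h. grad \<phi> y \<bullet> h - grad \<phi> x \<bullet> h) \<le> norm (grad \<phi> y - grad \<phi> x)"
        by (rule onorm_le) (metis Cauchy_Schwarz_ineq2 inner_diff_left real_norm_def)
      also have "\<dots> \<le> H * norm (y - x)"
        using grad_lipschitz T that by auto
      also have "\<dots> \<le> H * norm w"
        using segment_bound(1)[OF that] H_nonneg by (simp add: dist_norm norm_minus_commute mult_left_mono)
      finally show ?thesis .
    qed
  qed auto
  then show ?thesis
    by (simp add: power2_eq_square inner_add_right algebra_simps)
qed

lemma C2_on_ball_local_bounds:
  fixes \<phi> :: "real^'n \<Rightarrow> real"
  assumes C2: "C2_on (ball x0 \<epsilon>) \<phi>" and \<epsilon>: "0 < \<epsilon>"
  obtains P G H \<delta> where "0 \<le> P" "0 \<le> G" "0 \<le> H" "0 < \<delta>" "\<delta> \<le> 1"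
    and "\<And>x. x \<in> ball x0 (\<epsilon>/2) \<Longrightarrow> \<bar>\<phi> x\<bar> \<le> P \<and> norm (grad \<phi> x) \<le> G \<and> norm (hess \<phi> x) \<le> H"
    and "\<And>x w. x \<in> ball x0 (\<epsilon>/2) \<Longrightarrow> norm w < \<delta> \<Longrightarrow>
           \<bar>\<phi> (x + w) - \<phi> x - grad \<phi> x \<bullet> w\<bar> \<le> H * (norm w)\<^sup>2"
proof -
  let ?S = "cball x0 (3*\<epsilon>/4)"
  have S: "compact ?S" "?S \<subseteq> ball x0 \<epsilon>"
    using \<epsilon> by (auto simp: subset_eq)
  have d1: "\<And>y. y \<in> ball x0 \<epsilon> \<Longrightarrow> (\<phi> has_derivative (\<lambda>h. grad \<phi> y \<bullet> h)) (at y)"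
    and d2: "\<And>y. y \<in> ball x0 \<epsilon> \<Longrightarrow> ((grad \<phi>) has_derivative (\<lambda>h. hess \<phi> y *v h)) (at y)"
    and hess_cont: "continuous_on (ball x0 \<epsilon>) (hess \<phi>)"
    using C2 unfolding C2_on_def by auto
  have "continuous_on (ball x0 \<epsilon>) \<phi>" "continuous_on (ball x0 \<epsilon>) (grad \<phi>)"
    using d1 d2 by (meson continuous_at_imp_continuous_on has_derivative_continuous)+
  then obtain P G Hn where P: "0 \<le> P" "\<And>y. y \<in> ?S \<Longrightarrow> norm (\<phi> y) \<le> P"
    and G: "0 \<le> G" "\<And>y. y \<in> ?S \<Longrightarrow> norm (grad \<phi> y) \<le> G"
    and Hn: "0 \<le> Hn" "\<And>y. y \<in> ?S \<Longrightarrow> norm (hess \<phi> y) \<le> Hn"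
    using continuous_on_compact_bound[OF S(1)] continuous_on_subset[OF _ S(2)] hess_cont by metis
  define H where "H = real CARD('n) * real CARD('n) * Hn"
  have Hn_le_H: "Hn \<le> H"
    using Hn(1) by (simp add: H_def mult_le_cancel_right1 mult_ge1_I)
  have hess_onorm: "onorm (\<lambda>h. hess \<phi> y *v h) \<le> H" if "y \<in> ?S" for y
  proof (unfold H_def, rule onorm_le_matrix_component)
    show "\<bar>hess \<phi> y $ i $ j\<bar> \<le> Hn" for i j
      using component_le_norm_cart[of "hess \<phi> y $ i" j]
        Finite_Cartesian_Product.norm_nth_le[of "hess \<phi> y" i] Hn(2)[OF that] by linarith
  qed
  define \<delta> where "\<delta> = min (\<epsilon>/4) 1"
  show ?thesis
  proof (rule that[of P G H \<delta>])
    show "0 \<le> H" "0 < \<delta>" "\<delta> \<le> 1"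
      using Hn_le_H Hn(1) \<epsilon> by (auto simp: \<delta>_def)
    show "\<bar>\<phi> x\<bar> \<le> P \<and> norm (grad \<phi> x) \<le> G \<and> norm (hess \<phi> x) \<le> H" if "x \<in> ball x0 (\<epsilon>/2)" for x
      using that P(2)[of x] G(2)[of x] Hn(2)[of x] Hn_le_H \<epsilon> by auto
    show "\<bar>\<phi> (x + w) - \<phi> x - grad \<phi> x \<bullet> w\<bar> \<le> H * (norm w)\<^sup>2"
      if x: "x \<in> ball x0 (\<epsilon>/2)" and w: "norm w < \<delta>" for x w
    proof (rule abs_taylor2_remainder_le[where S = "ball x0 (3*\<epsilon>/4)"])
      have "dist x0 (x + w) \<le> dist x0 x + norm w"
        by (metis dist_norm dist_triangle2 add_diff_cancel_left' norm_minus_commute)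
      then show "x + w \<in> ball x0 (3*\<epsilon>/4)"
        using x w by (auto simp: \<delta>_def)
    qed (use x \<epsilon> S(2) d1 d2 hess_onorm in auto)
  qed (use P G in auto)
qed

lemma nonlocal_integrand_le_majorant:
  fixes u :: "'a::euclidean_space \<Rightarrow> real" and n K :: "'a \<Rightarrow> real"
  assumes r: "0 < r" "\<delta> \<le> 1/r"
    and u_far: "\<bar>u (x + z)\<bar> \<le> Mp" and u_x: "\<bar>u x\<bar> \<le> P" and g: "norm g \<le> G"
    and taylor: "\<And>w. norm w < \<delta> \<Longrightarrow> \<bar>u (x + w) - u x - g \<bullet> w\<bar> \<le> H * (norm w)\<^sup>2"
    and n: "0 \<le> n (r *\<^sub>R z)" "n (r *\<^sub>R z) \<le> K (r *\<^sub>R z)"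
  shows "\<bar>(u (x + z) - u x - indicator (ball 0 (1/r)) z * (g \<bullet> z)) * r ^ (DIM('a) + 2) * n (r *\<^sub>R z)\<bar>
         \<le> r ^ DIM('a) * nonlocal_majorant H (Mp + P) G \<delta> K r (r *\<^sub>R z)"
proof -
  have norm_rz: "norm (r *\<^sub>R z) = r * norm z"
    using r by simp
  have lhs_eq: "\<bar>(u (x + z) - u x - indicator (ball 0 (1/r)) z * (g \<bullet> z)) * r ^ (DIM('a) + 2) * n (r *\<^sub>R z)\<bar>
      = \<bar>u (x + z) - u x - indicator (ball 0 (1/r)) z * (g \<bullet> z)\<bar> * r ^ (DIM('a) + 2) * n (r *\<^sub>R z)"
    using r n by (simp add: abs_mult)
  show ?thesis
  proof (cases "norm z < \<delta>")
    case True
    then have "indicator (ball 0 (1/r)) z = (1::real)"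
      using r by (simp add: indicator_def)
    then have "\<bar>(u (x + z) - u x - indicator (ball 0 (1/r)) z * (g \<bullet> z)) * r ^ (DIM('a) + 2) * n (r *\<^sub>R z)\<bar>
        \<le> (H * (norm z)\<^sup>2) * r ^ (DIM('a) + 2) * K (r *\<^sub>R z)"
      unfolding lhs_eq using taylor[OF True] r n
      by (intro mult_mono) (auto intro: order_trans[OF abs_ge_zero])
    also have "\<dots> = r ^ DIM('a) * nonlocal_majorant H (Mp + P) G \<delta> K r (r *\<^sub>R z)"
      using True r by (simp add: nonlocal_majorant_def norm_rz power_mult_distrib power_add algebra_simps power2_eq_square)
    finally show ?thesis .
  next
    case False
    have ind: "indicator (ball 0 (1/r)) z = (if norm (r *\<^sub>R z) < 1 then 1 else (0::real))"
      using r by (simp add: indicator_def norm_rz field_simps)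
    have "\<bar>g \<bullet> z\<bar> \<le> G * norm z"
      using Cauchy_Schwarz_ineq2[of g z] mult_right_mono[OF g norm_ge_zero, of z] by linarith
    then have "\<bar>indicator (ball 0 (1/r)) z * (g \<bullet> z)\<bar> \<le> (if norm (r *\<^sub>R z) < 1 then G * norm z else 0)"
      unfolding ind by simp
    then have "\<bar>u (x + z) - u x - indicator (ball 0 (1/r)) z * (g \<bullet> z)\<bar>
        \<le> Mp + P + (if norm (r *\<^sub>R z) < 1 then G * norm z else 0)"
      using u_far u_x by linarith
    then have "\<bar>(u (x + z) - u x - indicator (ball 0 (1/r)) z * (g \<bullet> z)) * r ^ (DIM('a) + 2) * n (r *\<^sub>R z)\<bar>
        \<le> (Mp + P + (if norm (r *\<^sub>R z) < 1 then G * norm z else 0)) * r ^ (DIM('a) + 2) * K (r *\<^sub>R z)"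
      unfolding lhs_eq using r n
      by (intro mult_mono) (auto intro: order_trans[OF abs_ge_zero])
    also have "\<dots> = r ^ DIM('a) * nonlocal_majorant H (Mp + P) G \<delta> K r (r *\<^sub>R z)"
      using False r by (simp add: nonlocal_majorant_def norm_rz power_mult_distrib power_add algebra_simps power2_eq_square)
    finally show ?thesis .
  qed
qed

lemma abs_nonlocal_r_le:
  fixes \<phi> :: "real^'n \<Rightarrow> real" and K :: "real^'n \<Rightarrow> real"
  assumes r: "0 < r" "\<delta> \<le> 1/r"
    and [measurable]: "\<phi> \<in> borel_measurable lborel" "K \<in> borel_measurable lborel"
    and Mp: "AE y in lborel. \<bar>\<phi> y\<bar> \<le> Mp" and "\<bar>\<phi> x\<bar> \<le> P" "norm (grad \<phi> x) \<le> G"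
    and "\<And>w. norm w < \<delta> \<Longrightarrow> \<bar>\<phi> (x + w) - \<phi> x - grad \<phi> x \<bullet> w\<bar> \<le> H * (norm w)\<^sup>2"
    and N: "\<And>w. 0 \<le> N \<alpha> \<beta> (r *\<^sub>R (x - x0) + x0) w \<and> N \<alpha> \<beta> (r *\<^sub>R (x - x0) + x0) w \<le> K w"
    and int: "integrable lborel (nonlocal_majorant H (Mp + P) G \<delta> K r)"
  shows "\<bar>nonlocal_r N r x0 \<alpha> \<beta> x \<phi>\<bar> \<le> (\<integral>w. nonlocal_majorant H (Mp + P) G \<delta> K r w \<partial>lborel)"
proof -
  let ?g = "\<lambda>z. (\<phi> (x + z) - \<phi> x - indicator (ball 0 (1/r)) z * (grad \<phi> x \<bullet> z))
            * r ^ (CARD('n) + 2) * N \<alpha> \<beta> (r *\<^sub>R (x - x0) + x0) (r *\<^sub>R z)"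
  let ?h = "\<lambda>z. r ^ DIM(real^'n) * nonlocal_majorant H (Mp + P) G \<delta> K r (r *\<^sub>R z)"
  have "AE y in distr lborel borel ((+) x). \<bar>\<phi> y\<bar> \<le> Mp"
    unfolding lborel_distr_plus by (rule Mp)
  then have "AE z in lborel. \<bar>\<phi> (x + z)\<bar> \<le> Mp"
    by (subst (asm) AE_distr_iff) auto
  moreover have "\<bar>?g z\<bar> \<le> ?h z" if "\<bar>\<phi> (x + z)\<bar> \<le> Mp" for z
    using nonlocal_integrand_le_majorant[where u=\<phi> and g="grad \<phi> x"
        and n="N \<alpha> \<beta> (r *\<^sub>R (x - x0) + x0)" and K=K, OF r that assms(6-8) conjunct1[OF N[of "r *\<^sub>R z"]]
        conjunct2[OF N[of "r *\<^sub>R z"]]]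
    by simp
  ultimately have g_le_h: "AE z in lborel. \<bar>?g z\<bar> \<le> ?h z"
    by (auto elim: eventually_mono)
  have "\<bar>nonlocal_r N r x0 \<alpha> \<beta> x \<phi>\<bar> \<le> (\<integral>z. \<bar>?g z\<bar> \<partial>lborel)"
    unfolding nonlocal_r_def using integral_norm_bound[of lborel ?g] by (simp only: real_norm_def)
  also have "\<dots> \<le> (\<integral>z. ?h z \<partial>lborel)"
    using g_le_h lborel_dilation(1)[OF _ r(1) int]
    by (intro integral_mono_AE') (auto elim: eventually_mono intro: order_trans[OF abs_ge_zero])
  also have "\<dots> = (\<integral>w. nonlocal_majorant H (Mp + P) G \<delta> K r w \<partial>lborel)"
    by (rule lborel_dilation(2)[OF _ r(1) int]) simp
  finally show ?thesis .
qed

lemma abs_rescaled_bracket_diff_le: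
  fixes A A0 Hm :: "real^'n^'n" and v g :: "real^'n"
  assumes A: "norm (A - A0) \<le> \<eta>" and Hm: "norm Hm \<le> H" and I: "\<bar>I\<bar> \<le> L"
    and coeff: "norm v \<le> M" "\<bar>c\<bar> \<le> M" "\<bar>f\<bar> \<le> M"
    and u: "\<bar>u\<bar> \<le> P" and g: "norm g \<le> G" and r: "0 \<le> r" "r \<le> 1"
  shows "\<bar>(- trace (A ** Hm) - I + r * (v \<bullet> g) + r\<^sup>2 * c * u + r\<^sup>2 * f) - (- trace (A0 ** Hm))\<bar>
         \<le> real CARD('n) ^ 2 * (\<eta> * H) + L + r * (M * (G + P + 1))"
proof -
  have "\<bar>trace (A0 ** Hm) - trace (A ** Hm)\<bar> \<le> real CARD('n) ^ 2 * (norm (A0 - A) * norm Hm)"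
    unfolding trace_matrix_mult_diff by (rule abs_trace_matrix_mult_le)
  also have "\<dots> \<le> real CARD('n) ^ 2 * (\<eta> * H)"
    using A Hm by (intro mult_left_mono mult_mono) (auto simp: norm_minus_commute intro: order_trans[OF norm_ge_zero])
  finally have trace: "\<bar>trace (A0 ** Hm) - trace (A ** Hm)\<bar> \<le> real CARD('n) ^ 2 * (\<eta> * H)" .
  have "norm v * norm g \<le> M * G"
    using coeff(1) g by (intro mult_mono) (auto intro: order_trans[OF norm_ge_zero])
  then have drift: "\<bar>r * (v \<bullet> g)\<bar> \<le> r * (M * G)"
    using Cauchy_Schwarz_ineq2[of v g] r by (simp add: abs_mult mult_left_mono)
  have r2: "r\<^sup>2 \<le> r"
    using r by (simp add: power2_eq_square mult_left_le)
  have "\<bar>c * u\<bar> \<le> M * P"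
    unfolding abs_mult using coeff u by (intro mult_mono) auto
  then have zero_order: "\<bar>r\<^sup>2 * c * u\<bar> \<le> r * (M * P)"
    using r2 r by (simp add: abs_mult mult.assoc mult_mono)
  have source: "\<bar>r\<^sup>2 * f\<bar> \<le> r * M"
    using r2 r coeff unfolding abs_mult by (intro mult_mono) auto
  have eq: "(- trace (A ** Hm) - I + r * (v \<bullet> g) + r\<^sup>2 * c * u + r\<^sup>2 * f) - (- trace (A0 ** Hm))
      = (trace (A0 ** Hm) - trace (A ** Hm)) - I + r * (v \<bullet> g) + r\<^sup>2 * c * u + r\<^sup>2 * f"
    by simp
  show ?thesis
    unfolding eq distrib_left using trace I drift zero_order source by arith
qed

lemma abs_op_r_minus_op_0_le:
  fixes a :: "'a \<Rightarrow> 'b \<Rightarrow> real^'n \<Rightarrow> real^'n^'n" and u :: "real^'n \<Rightarrow> real"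
    and x x0 :: "real^'n" and r :: real
  defines "xt \<equiv> r *\<^sub>R (x - x0) + x0"
  assumes a_close: "\<And>\<alpha> \<beta>. norm (a \<alpha> \<beta> xt - a \<alpha> \<beta> z) \<le> \<eta>"
    and a_bdd: "\<And>\<alpha> \<beta>. norm (a \<alpha> \<beta> z) \<le> M"
    and coeff_bdd: "\<And>\<alpha> \<beta>. norm (b \<alpha> \<beta> xt) \<le> M \<and> \<bar>c \<alpha> \<beta> xt\<bar> \<le> M \<and> \<bar>f \<alpha> \<beta> xt\<bar> \<le> M"
    and nonlocal: "\<And>\<alpha> \<beta>. \<bar>nonlocal_r N r x0 \<alpha> \<beta> x u\<bar> \<le> L"
    and "norm (hess u x) \<le> H" "\<bar>u x\<bar> \<le> P" "norm (grad u x) \<le> G" "0 \<le> r" "r \<le> 1"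
  shows "\<bar>op_r a b c f N r x0 x u - op_0 a z x u\<bar>
         \<le> real CARD('n) ^ 2 * (\<eta> * H) + L + r * (M * (G + P + 1))"
  unfolding op_r_def op_0_def Let_def xt_def[symmetric]
proof (rule SUP_INF_abs_diff_le[where B="real CARD('n) ^ 2 * (M * norm (hess u x))"])
  fix \<alpha> \<beta>
  show "\<bar>(- trace (a \<alpha> \<beta> xt ** hess u x) - nonlocal_r N r x0 \<alpha> \<beta> x u + r * (b \<alpha> \<beta> xt \<bullet> grad u x)
          + r\<^sup>2 * c \<alpha> \<beta> xt * u x + r\<^sup>2 * f \<alpha> \<beta> xt) - (- trace (a \<alpha> \<beta> z ** hess u x))\<bar>
        \<le> real CARD('n) ^ 2 * (\<eta> * H) + L + r * (M * (G + P + 1))"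
    using a_close coeff_bdd nonlocal assms(6-) by (intro abs_rescaled_bracket_diff_le) auto
  have "\<bar>trace (a \<alpha> \<beta> z ** hess u x)\<bar> \<le> real CARD('n) ^ 2 * (norm (a \<alpha> \<beta> z) * norm (hess u x))"
    by (rule abs_trace_matrix_mult_le)
  also have "\<dots> \<le> real CARD('n) ^ 2 * (M * norm (hess u x))"
    using a_bdd by (intro mult_left_mono mult_right_mono) auto
  finally show "\<bar>- trace (a \<alpha> \<beta> z ** hess u x)\<bar> \<le> real CARD('n) ^ 2 * (M * norm (hess u x))"
    by simp
qed

lemma rescaled_point_bounds:
  fixes x x0 z :: "'a::real_normed_vector"
  assumes "norm x < 2" "norm x0 < 1" "0 \<le> r"
  shows "norm (r *\<^sub>R (x - x0) + x0) \<le> 3 * r + 1"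
    and "dist (r *\<^sub>R (x - x0) + x0) z \<le> 3 * r + dist x0 z"
proof -
  have "norm (x - x0) \<le> 3"
    using assms(1,2) norm_triangle_ineq4[of x x0] by linarith
  then have "norm (r *\<^sub>R (x - x0)) \<le> 3 * r"
    using assms(3) by (simp add: mult_left_mono mult.commute)
  then show "norm (r *\<^sub>R (x - x0) + x0) \<le> 3 * r + 1"
    and "dist (r *\<^sub>R (x - x0) + x0) z \<le> 3 * r + dist x0 z"
    using assms norm_triangle_ineq[of "r *\<^sub>R (x - x0)" x0]
      norm_triangle_ineq[of "r *\<^sub>R (x - x0)" "x0 - z"]
    by (auto simp: dist_norm algebra_simps)
qed

lemma abs_op_r_minus_op_0_le_majorant:
  fixes a :: "'a \<Rightarrow> 'b \<Rightarrow> real^'n \<Rightarrow> real^'n^'n" and \<phi> :: "real^'n \<Rightarrow> real"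
  assumes M: "\<forall>\<alpha> \<beta>. \<forall>y\<in>cball 0 2.
      norm (a \<alpha> \<beta> y) \<le> M \<and> norm (b \<alpha> \<beta> y) \<le> M \<and> \<bar>c \<alpha> \<beta> y\<bar> \<le> M \<and> \<bar>f \<alpha> \<beta> y\<bar> \<le> M"
    and a_uc: "\<And>\<alpha> \<beta> y y'. y \<in> cball 0 2 \<Longrightarrow> y' \<in> cball 0 2 \<Longrightarrow> dist y y' < \<delta>a \<Longrightarrow>
      dist (a \<alpha> \<beta> y) (a \<alpha> \<beta> y') < \<eta>"
    and N: "\<forall>\<alpha> \<beta>. \<forall>y\<in>cball 0 2. \<forall>w. 0 \<le> N \<alpha> \<beta> y w \<and> N \<alpha> \<beta> y w \<le> K w"
    and [measurable]: "K \<in> borel_measurable lborel" "\<phi> \<in> borel_measurable lborel"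
    and Mp: "AE y in lborel. \<bar>\<phi> y\<bar> \<le> Mp"
    and local_bounds: "\<bar>\<phi> x\<bar> \<le> P \<and> norm (grad \<phi> x) \<le> G \<and> norm (hess \<phi> x) \<le> H"
    and taylor: "\<And>w. norm w < \<delta> \<Longrightarrow> \<bar>\<phi> (x + w) - \<phi> x - grad \<phi> x \<bullet> w\<bar> \<le> H * (norm w)\<^sup>2"
    and \<delta>: "\<delta> \<le> 1" and r: "0 < r" "r < 1/3"
    and near: "norm x < 2" "norm x0 < 1" "norm z \<le> 1" "3 * r + dist x0 z < \<delta>a"
    and int: "integrable lborel (nonlocal_majorant H (Mp + P) G \<delta> K r)"
  shows "\<bar>op_r a b c f N r x0 x \<phi> - op_0 a z x \<phi>\<bar>
         \<le> real CARD('n) ^ 2 * (\<eta> * H) + (\<integral>w. nonlocal_majorant H (Mp + P) G \<delta> K r w \<partial>lborel)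
            + r * (M * (G + P + 1))"
proof -
  let ?xt = "r *\<^sub>R (x - x0) + x0"
  have xt: "?xt \<in> cball 0 2" "dist ?xt z < \<delta>a"
    using rescaled_point_bounds(1)[of x x0 r] rescaled_point_bounds(2)[of x x0 r z] near r by auto
  have z: "z \<in> cball 0 2"
    using near(3) by auto
  show ?thesis
  proof (rule abs_op_r_minus_op_0_le)
    show "norm (a \<alpha> \<beta> ?xt - a \<alpha> \<beta> z) \<le> \<eta>" for \<alpha> \<beta>
      using a_uc[OF xt(1) z xt(2), of \<alpha> \<beta>] by (simp add: dist_norm)
    have "\<delta> \<le> 1 / r"
      using \<delta> r by (smt (verit) le_divide_eq_1_pos)
    then show "\<bar>nonlocal_r N r x0 \<alpha> \<beta> x \<phi>\<bar> \<le> (\<integral>w. nonlocal_majorant H (Mp + P) G \<delta> K r w \<partial>lborel)"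
      for \<alpha> \<beta>
      using N xt(1) local_bounds by (intro abs_nonlocal_r_le[OF r(1) _ _ _ Mp _ _ taylor _ int]) auto
  qed (use M z xt(1) local_bounds r in auto)
qed

theorem lemma3p1:
  fixes a :: "'a \<Rightarrow> 'b \<Rightarrow> real^'n \<Rightarrow> real^'n^'n"
    and b :: "'a \<Rightarrow> 'b \<Rightarrow> real^'n \<Rightarrow> real^'n"
    and c f :: "'a \<Rightarrow> 'b \<Rightarrow> real^'n \<Rightarrow> real"
    and N :: "'a \<Rightarrow> 'b \<Rightarrow> real^'n \<Rightarrow> real^'n \<Rightarrow> real"
    and K :: "real^'n \<Rightarrow> real"
    and lam Lam :: real
    and xs :: "nat \<Rightarrow> real^'n" and rs :: "nat \<Rightarrow> real" and z :: "real^'n"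
  assumes A_bdd: "\<exists>M. \<forall>\<alpha> \<beta>. \<forall>x\<in>cball 0 2.
      norm (a \<alpha> \<beta> x) \<le> M \<and> norm (b \<alpha> \<beta> x) \<le> M \<and> \<bar>c \<alpha> \<beta> x\<bar> \<le> M \<and> \<bar>f \<alpha> \<beta> x\<bar> \<le> M"
    and A_uc: "\<forall>e>0. \<exists>\<delta>>0. \<forall>\<alpha> \<beta>. \<forall>x\<in>cball 0 2. \<forall>y\<in>cball 0 2. dist x y < \<delta> \<longrightarrow>
      dist (a \<alpha> \<beta> x) (a \<alpha> \<beta> y) < e \<and> dist (b \<alpha> \<beta> x) (b \<alpha> \<beta> y) < e
      \<and> dist (c \<alpha> \<beta> x) (c \<alpha> \<beta> y) < e \<and> dist (f \<alpha> \<beta> x) (f \<alpha> \<beta> y) < e"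
    and A_sym: "\<forall>\<alpha> \<beta>. \<forall>x\<in>cball 0 2. transpose (a \<alpha> \<beta> x) = a \<alpha> \<beta> x"
    and B_ell: "0 < lam" "lam \<le> Lam"
      "\<forall>\<alpha> \<beta>. \<forall>x\<in>cball 0 2. \<forall>\<xi>.
         lam * (norm \<xi>)\<^sup>2 \<le> \<xi> \<bullet> (a \<alpha> \<beta> x *v \<xi>) \<and> \<xi> \<bullet> (a \<alpha> \<beta> x *v \<xi>) \<le> Lam * (norm \<xi>)\<^sup>2"
    and C_K: "K \<in> borel_measurable lborel" "\<forall>w. 0 \<le> K w" "K 0 = 0"
      "integrable lborel (\<lambda>w. min ((norm w)\<^sup>2) 1 * K w)"
    and C_N: "\<forall>\<alpha> \<beta>. \<forall>x\<in>cball 0 2. \<forall>w. 0 \<le> N \<alpha> \<beta> x w \<and> N \<alpha> \<beta> x w \<le> K w"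
      "\<forall>\<alpha> \<beta>. \<forall>x\<in>cball 0 2. N \<alpha> \<beta> x 0 = 0"
    and C_cont: "\<forall>\<sigma>>0. \<forall>w. norm w \<ge> \<sigma> \<longrightarrow>
      (\<forall>e>0. \<exists>\<delta>>0. \<forall>\<alpha> \<beta>. \<forall>x\<in>cball 0 2. \<forall>y\<in>cball 0 2.
         dist x y < \<delta> \<longrightarrow> \<bar>N \<alpha> \<beta> x w - N \<alpha> \<beta> y w\<bar> < e)"
    and seq: "\<forall>k. xs k \<in> ball 0 1" "\<forall>k. 0 < rs k"
      "xs \<longlonglongrightarrow> z" "z \<in> cball 0 1" "rs \<longlonglongrightarrow> 0"
  shows "\<forall>x0 \<epsilon> \<phi>. 0 < \<epsilon> \<and> ball x0 \<epsilon> \<subseteq> ball 0 2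
      \<and> \<phi> \<in> borel_measurable lborel \<and> (\<exists>M. AE y in lborel. \<bar>\<phi> y\<bar> \<le> M)
      \<and> C2_on (ball x0 \<epsilon>) \<phi> \<longrightarrow>
      (\<forall>e>0. \<forall>\<^sub>F k in sequentially. \<forall>x\<in>ball x0 (\<epsilon>/2).
         \<bar>op_r a b c f N (rs k) (xs k) x \<phi> - op_0 a z x \<phi>\<bar> < e)"
proof (intro allI impI)
  fix x0 \<epsilon> and \<phi> :: "real^'n \<Rightarrow> real" and e :: real
  assume "0 < \<epsilon> \<and> ball x0 \<epsilon> \<subseteq> ball 0 2 \<and> \<phi> \<in> borel_measurable lborel
      \<and> (\<exists>M. AE y in lborel. \<bar>\<phi> y\<bar> \<le> M) \<and> C2_on (ball x0 \<epsilon>) \<phi>" and e: "0 < e"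
  then obtain Mp0 where \<epsilon>: "0 < \<epsilon>" and ball: "ball x0 \<epsilon> \<subseteq> ball 0 2"
    and \<phi>: "\<phi> \<in> borel_measurable lborel" "C2_on (ball x0 \<epsilon>) \<phi>" and Mp0: "AE y in lborel. \<bar>\<phi> y\<bar> \<le> Mp0"
    by blast
  define Mp where "Mp = max Mp0 0"
  have Mp: "0 \<le> Mp" "AE y in lborel. \<bar>\<phi> y\<bar> \<le> Mp"
    using Mp0 by (auto simp: Mp_def elim: eventually_mono)
  obtain M where M: "\<forall>\<alpha> \<beta>. \<forall>x\<in>cball 0 2.
      norm (a \<alpha> \<beta> x) \<le> M \<and> norm (b \<alpha> \<beta> x) \<le> M \<and> \<bar>c \<alpha> \<beta> x\<bar> \<le> M \<and> \<bar>f \<alpha> \<beta> x\<bar> \<le> M"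
    using A_bdd by blast
  obtain P G H \<delta> where PGH: "0 \<le> P" "0 \<le> G" "0 \<le> H" and \<delta>: "0 < \<delta>" "\<delta> \<le> 1"
    and local_bounds: "\<And>x. x \<in> ball x0 (\<epsilon>/2) \<Longrightarrow> \<bar>\<phi> x\<bar> \<le> P \<and> norm (grad \<phi> x) \<le> G \<and> norm (hess \<phi> x) \<le> H"
    and taylor: "\<And>x w. x \<in> ball x0 (\<epsilon>/2) \<Longrightarrow> norm w < \<delta> \<Longrightarrow>
           \<bar>\<phi> (x + w) - \<phi> x - grad \<phi> x \<bullet> w\<bar> \<le> H * (norm w)\<^sup>2"
    using C2_on_ball_local_bounds[OF \<phi>(2) \<epsilon>] by metis
  have rs: "filterlim rs (at_right 0) sequentially"
    using seq(2,5) by (auto simp: filterlim_at intro!: always_eventually less_imp_neq[symmetric])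
  define majorant_integral where "majorant_integral r = (\<integral>w. nonlocal_majorant H (Mp + P) G \<delta> K r w \<partial>lborel)" for r
  note majorant = nonlocal_majorant_integral_tendsto_0[OF C_K(1-4) PGH(3) add_nonneg_nonneg[OF Mp(1) PGH(1)] PGH(2) \<delta>]
  have majorant_integral_lim: "(\<lambda>k. majorant_integral (rs k)) \<longlonglongrightarrow> 0"
    using filterlim_compose[OF majorant(1) rs] by (simp add: majorant_integral_def)
  have "\<forall>\<^sub>F \<eta> in at_right 0. 0 < \<eta> \<and> real CARD('n) ^ 2 * (\<eta> * H) < e/3"
    using e by (intro eventually_conj eventually_at_right_less order_tendstoD(2))
      (auto intro!: tendsto_eq_intros)
  then obtain \<eta> where \<eta>: "0 < \<eta>" "real CARD('n) ^ 2 * (\<eta> * H) < e/3"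
    using eventually_happens' trivial_limit_at_right_real by blast
  obtain \<delta>a where "0 < \<delta>a" and a_uc: "\<And>\<alpha> \<beta> x y. x \<in> cball 0 2 \<Longrightarrow> y \<in> cball 0 2 \<Longrightarrow> dist x y < \<delta>a \<Longrightarrow>
      dist (a \<alpha> \<beta> x) (a \<alpha> \<beta> y) < \<eta>"
    using A_uc \<eta>(1) by meson
  have near: "(\<lambda>k. 3 * rs k + dist (xs k) z) \<longlonglongrightarrow> 0" and small: "(\<lambda>k. rs k * (M * (G + P + 1))) \<longlonglongrightarrow> 0"
    using seq(3,5) by (auto intro!: tendsto_eq_intros simp: tendsto_dist_iff[symmetric])
  have "\<forall>\<^sub>F k in sequentially. rs k < 1/3 \<and> majorant_integral (rs k) < e/3
      \<and> 3 * rs k + dist (xs k) z < \<delta>a \<and> rs k * (M * (G + P + 1)) < e/3"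
    using e \<open>0 < \<delta>a\<close> by (intro eventually_conj order_tendstoD(2)[OF seq(5)]
      order_tendstoD(2)[OF majorant_integral_lim] order_tendstoD(2)[OF near] order_tendstoD(2)[OF small]) auto
  then show "\<forall>\<^sub>F k in sequentially. \<forall>x\<in>ball x0 (\<epsilon>/2). \<bar>op_r a b c f N (rs k) (xs k) x \<phi> - op_0 a z x \<phi>\<bar> < e"
  proof eventually_elim
    case (elim k)
    show ?case
    proof
      fix x assume x: "x \<in> ball x0 (\<epsilon>/2)"
      have "norm x < 2"
        using x ball \<epsilon> by (auto simp: subset_eq)
      then have "\<bar>op_r a b c f N (rs k) (xs k) x \<phi> - op_0 a z x \<phi>\<bar>
          \<le> real CARD('n) ^ 2 * (\<eta> * H) + majorant_integral (rs k) + rs k * (M * (G + P + 1))"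
        unfolding majorant_integral_def using seq(1,2,4) elim local_bounds[OF x]
        by (intro abs_op_r_minus_op_0_le_majorant[OF M a_uc C_N(1) C_K(1) \<phi>(1) Mp(2) _ taylor[OF x] \<delta>(2)]
            majorant(2)) auto
      then show "\<bar>op_r a b c f N (rs k) (xs k) x \<phi> - op_0 a z x \<phi>\<bar> < e"
        using \<eta>(2) elim by linarith
    qed
  qed
qed

end
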